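(* Let $G$ be an edge-colored graph of order $n$ such that $\delta^c(G)=n-1$ (so $G$ is complete and any two edges sharing a vertex have distinct colors). Then for any subset $S\subseteq V(G)$ with $|S|=5$, $G[S]$ contains a rainbow $C_4$.
   Context: An edge-colored graph is a finite simple graph $G$ with a map $C:E(G)\to\mathbb{N}$. The color degree $d^c(v)$ is the number of distinct colors on edges incident to $v$; $\delta^c(G)=\min_v d^c(v)$. A subgraph is rainbow if all its edges have distinct colors; $C_4$ is a cycle of length 4; $G[S]$ is the induced subgraph. *)

theory Defs
  imports Main
begin

definition simple_graph :: "'a set \<Rightarrow> 'a set set \<Rightarrow> bool" where
  "simple_graph V E \<longleftrightarrow> finite V \<and> (\<forall>e\<in>E. e \<subseteq> V \<and> card e = 2)"

definition color_degree :: "'a set set \<Rightarrow> ('a set \<Rightarrow> nat) \<Rightarrow> 'a \<Rightarrow> nat" where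
  "color_degree E C v = card (C ` {e \<in> E. v \<in> e})"

definition min_color_degree :: "'a set \<Rightarrow> 'a set set \<Rightarrow> ('a set \<Rightarrow> nat) \<Rightarrow> nat" where
  "min_color_degree V E C = Min (color_degree E C ` V)"

definition has_rainbow_C4_in :: "'a set set \<Rightarrow> ('a set \<Rightarrow> nat) \<Rightarrow> 'a set \<Rightarrow> bool" where
  "has_rainbow_C4_in E C S \<longleftrightarrow>
     (\<exists>a b c d. a \<in> S \<and> b \<in> S \<and> c \<in> S \<and> d \<in> S \<and> distinct [a, b, c, d] \<and>
        {a, b} \<in> E \<and> {b, c} \<in> E \<and> {c, d} \<in> E \<and> {d, a} \<in> E \<and>
        distinct [C {a, b}, C {b, c}, C {c, d}, C {d, a}])"

end

theory Submission
  imports Defs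
begin

text \<open>Color degree n - 1 forces every vertex to be adjacent to all others by edges of
pairwise distinct colors, so the coloring is a proper coloring of the complete graph. Then a
4-cycle is rainbow as soon as both pairs of opposite edges get distinct colors. A 4-set carries
three 4-cycles, each made of two of its three perfect matchings, so either one of them is
rainbow or two matchings xy|zw and xz|yw are monochromatic; in the latter case, for a fifth
vertex v, properness at z and at y makes the cycle x-y-v-z rainbow.\<close>

definition properly_colored_clique :: "'a set set \<Rightarrow> ('a set \<Rightarrow> nat) \<Rightarrow> 'a set \<Rightarrow> bool" where
  "properly_colored_clique E C S \<longleftrightarrow>
     (\<forall>x\<in>S. \<forall>y\<in>S. x \<noteq> y \<longrightarrow> {x, y} \<in> E) \<and>
     (\<forall>x\<in>S. \<forall>y\<in>S. \<forall>z\<in>S. x \<noteq> y \<longrightarrow> x \<noteq> z \<longrightarrow> y \<noteq> z \<longrightarrow> C {x, y} \<noteq> C {x, z})"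

lemma properly_colored_clique_subset:
  "properly_colored_clique E C V \<Longrightarrow> S \<subseteq> V \<Longrightarrow> properly_colored_clique E C S"
  unfolding properly_colored_clique_def by blast

lemma properly_colored_clique_edge:
  "properly_colored_clique E C S \<Longrightarrow> x \<in> S \<Longrightarrow> y \<in> S \<Longrightarrow> x \<noteq> y \<Longrightarrow> {x, y} \<in> E"
  unfolding properly_colored_clique_def by blast

lemma properly_colored_clique_adjacent_colors_differ:
  "properly_colored_clique E C S \<Longrightarrow> x \<in> S \<Longrightarrow> y \<in> S \<Longrightarrow> z \<in> S \<Longrightarrow>
    x \<noteq> y \<Longrightarrow> x \<noteq> z \<Longrightarrow> y \<noteq> z \<Longrightarrow> C {x, y} \<noteq> C {x, z}"
  unfolding properly_colored_clique_def by blast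

lemma min_color_degree_le:
  "finite V \<Longrightarrow> v \<in> V \<Longrightarrow> min_color_degree V E C \<le> color_degree E C v"
  unfolding min_color_degree_def by simp

lemma incident_edges_subset:
  assumes "simple_graph V E"
  shows "{e \<in> E. v \<in> e} \<subseteq> (\<lambda>u. {v, u}) ` (V - {v})"
proof
  fix e assume "e \<in> {e \<in> E. v \<in> e}"
  then have "e \<subseteq> V" "card e = 2" "v \<in> e"
    using assms unfolding simple_graph_def by auto
  then obtain x y where "e = {x, y}" "x \<noteq> y" by (auto simp: card_2_iff)
  with \<open>e \<subseteq> V\<close> \<open>v \<in> e\<close> show "e \<in> (\<lambda>u. {v, u}) ` (V - {v})"
    by (auto simp: insert_commute)
qed

lemma full_color_degreeD:
  assumes G: "simple_graph V E" and v: "v \<in> V"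
    and deg: "card V - 1 \<le> color_degree E C v"
  shows "{e \<in> E. v \<in> e} = (\<lambda>u. {v, u}) ` (V - {v})"
    and "inj_on C {e \<in> E. v \<in> e}"
proof -
  let ?A = "{e \<in> E. v \<in> e}" and ?B = "(\<lambda>u. {v, u}) ` (V - {v})"
  have fin: "finite V" using G by (simp add: simple_graph_def)
  have AB: "?A \<subseteq> ?B" using G by (rule incident_edges_subset)
  have finB: "finite ?B" using fin by simp
  have finA: "finite ?A" using finite_subset[OF AB finB] .
  have "card ?A \<le> card ?B" using finB AB by (rule card_mono)
  moreover have "card ?B \<le> card V - 1"
    using card_image_le[of "V - {v}" "\<lambda>u. {v, u}"] fin v by simp
  moreover have "card V - 1 \<le> card (C ` ?A)" using deg by (simp add: color_degree_def)
  moreover have "card (C ` ?A) \<le> card ?A" using finA by (rule card_image_le)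
  ultimately have "card ?A = card ?B" "card (C ` ?A) = card ?A" by linarith+
  show "?A = ?B" using card_subset_eq[OF finB AB \<open>card ?A = card ?B\<close>] .
  show "inj_on C ?A" using eq_card_imp_inj_on[OF finA \<open>card (C ` ?A) = card ?A\<close>] .
qed

lemma properly_colored_clique_if_min_color_degree:
  assumes G: "simple_graph V E" and deg: "min_color_degree V E C = card V - 1"
  shows "properly_colored_clique E C V"
proof -
  have full: "card V - 1 \<le> color_degree E C x" if "x \<in> V" for x
    using min_color_degree_le[of V x E C] G deg that by (simp add: simple_graph_def)
  have incident: "{x, y} \<in> {e \<in> E. x \<in> e}" if "x \<in> V" "y \<in> V" "x \<noteq> y" for x y
    using full_color_degreeD(1)[OF G that(1) full[OF that(1)]] that by blast
  show ?thesis
    unfolding properly_colored_clique_def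
  proof (intro conjI ballI impI)
    fix x y assume "x \<in> V" "y \<in> V" "x \<noteq> y"
    then show "{x, y} \<in> E" using incident by blast
  next
    fix x y z assume xyz: "x \<in> V" "y \<in> V" "z \<in> V" "x \<noteq> y" "x \<noteq> z" "y \<noteq> z"
    then have "{x, y} \<noteq> {x, z}" by (auto simp: doubleton_eq_iff)
    then show "C {x, y} \<noteq> C {x, z}"
      using inj_onD[OF full_color_degreeD(2)[OF G \<open>x \<in> V\<close> full[OF \<open>x \<in> V\<close>]]]
        incident[of x y] incident[of x z] xyz by blast
  qed
qed

lemma rainbow_C4_if_opposite_colors_differ:
  assumes K: "properly_colored_clique E C S"
    and S: "a \<in> S" "b \<in> S" "c \<in> S" "d \<in> S" "distinct [a, b, c, d]"
    and "C {a, b} \<noteq> C {c, d}" "C {b, c} \<noteq> C {d, a}"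
  shows "has_rainbow_C4_in E C S"
proof -
  note edge = properly_colored_clique_edge[OF K]
  note proper = properly_colored_clique_adjacent_colors_differ[OF K]
  have "C {a, b} \<noteq> C {b, c}" "C {b, c} \<noteq> C {c, d}" "C {c, d} \<noteq> C {d, a}" "C {d, a} \<noteq> C {a, b}"
    using proper[of b a c] proper[of c b d] proper[of d c a] proper[of a d b] S
    by (auto simp: insert_commute)
  with assms edge[of a b] edge[of b c] edge[of c d] edge[of d a] show ?thesis
    unfolding has_rainbow_C4_in_def by (intro exI[of _ a] exI[of _ b] exI[of _ c] exI[of _ d]) auto
qed

lemma rainbow_C4_if_two_monochromatic_matchings:
  assumes K: "properly_colored_clique E C S"
    and S: "x \<in> S" "y \<in> S" "z \<in> S" "w \<in> S" "v \<in> S" "distinct [x, y, z, w, v]"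
    and xy_zw: "C {x, y} = C {z, w}" and xz_yw: "C {x, z} = C {y, w}"
  shows "has_rainbow_C4_in E C S"
proof (rule rainbow_C4_if_opposite_colors_differ[OF K, of x y v z])
  note proper = properly_colored_clique_adjacent_colors_differ[OF K]
  show "C {x, y} \<noteq> C {v, z}"
    using xy_zw proper[of z w v] S by (auto simp: insert_commute)
  show "C {y, v} \<noteq> C {z, x}"
    using xz_yw proper[of y w v] S by (auto simp: insert_commute)
qed (use S in auto)

lemma rainbow_C4_in_properly_colored_K5:
  assumes K: "properly_colored_clique E C S"
    and S: "a \<in> S" "b \<in> S" "c \<in> S" "d \<in> S" "e \<in> S" "distinct [a, b, c, d, e]"
  shows "has_rainbow_C4_in E C S"
proof -
  consider "C {a, b} \<noteq> C {c, d}" "C {b, c} \<noteq> C {d, a}"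
    | "C {a, c} \<noteq> C {b, d}" "C {c, b} \<noteq> C {d, a}"
    | "C {a, b} \<noteq> C {d, c}" "C {b, d} \<noteq> C {c, a}"
    | "C {a, b} = C {c, d}" "C {a, c} = C {b, d}"
    | "C {a, b} = C {d, c}" "C {a, d} = C {b, c}"
    | "C {a, c} = C {d, b}" "C {a, d} = C {c, b}"
    by (metis insert_commute)
  then show ?thesis
  proof cases
    case 1
    then show ?thesis using rainbow_C4_if_opposite_colors_differ[OF K, of a b c d] S by simp
  next
    case 2
    then show ?thesis using rainbow_C4_if_opposite_colors_differ[OF K, of a c b d] S by auto
  next
    case 3
    then show ?thesis using rainbow_C4_if_opposite_colors_differ[OF K, of a b d c] S by auto
  next
    case 4
    then show ?thesis using rainbow_C4_if_two_monochromatic_matchings[OF K, of a b c d e] S by simp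
  next
    case 5
    then show ?thesis using rainbow_C4_if_two_monochromatic_matchings[OF K, of a b d c e] S by auto
  next
    case 6
    then show ?thesis using rainbow_C4_if_two_monochromatic_matchings[OF K, of a c d b e] S by auto
  qed
qed

theorem lemma10:
  fixes V :: "'a set" and E :: "'a set set" and C :: "'a set \<Rightarrow> nat" and S :: "'a set"
  assumes "simple_graph V E"
    and "min_color_degree V E C = card V - 1"
    and "S \<subseteq> V" and "card S = 5"
  shows "has_rainbow_C4_in E C S"
proof -
  have K: "properly_colored_clique E C S"
    using properly_colored_clique_if_min_color_degree[OF assms(1,2)] assms(3)
    by (rule properly_colored_clique_subset)
  obtain a b c d e where "S = {a, b, c, d, e}" "distinct [a, b, c, d, e]"
    using \<open>card S = 5\<close> by (simp add: card_Suc_eq numeral_eq_Suc) blast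
  then show ?thesis
    using rainbow_C4_in_properly_colored_K5[OF K, of a b c d e] by simp
qed

end
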